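(* For $\alpha>1$ let $R_1$ be the rectangle with vertices $(\pm\tfrac12,\pm\tfrac\alpha2,0)$, $R_2$ the rectangle with vertices $(\pm\tfrac\alpha2,0,\pm\tfrac12)$, and $R_3$ the rectangle with vertices $(0,\pm\tfrac12,\pm\tfrac\alpha2)$ (each with side lengths $1$ and $\alpha$); these form the Borromean rings. The minimum distance energy of $R_1\cup R_2\cup R_3$ is $$E_B(\alpha)=6\left(17\alpha^2+\frac{16\alpha}{\alpha^2+1}+\frac{16}{2\alpha^2-2\alpha+1}+\frac{8\alpha}{(\alpha-1)^2}+\frac{8\alpha}{(\alpha+1)^2}+\frac{1}{\alpha^2}\right),$$ in which each rectangle contributes self-energy $2(\alpha^2+\alpha^{-2})$. The minimum of $E_B$ over $\alpha>1$ is attained at $\alpha^*\approx1.756$, with $E_B(\alpha^* )\approx542.6$.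
   Context: For a link of closed polygons in $\mathbb R^3$ (each with at least four edges), the minimum distance (MD) energy is $E_{MD}=\sum_{(e,e')}\frac{\ell_e\ell_{e'}}{\mathrm{MD}(e,e')^2}$, summed over all ordered pairs $(e,e')$ of distinct edges that share no vertex (edges on different components never share a vertex), where $\ell_e$ is the length of edge $e$ and $\mathrm{MD}(e,e')$ is the minimum Euclidean distance between the two closed line segments. With this convention a square has MD energy $4$. *)

theory Defs
  imports "HOL-Analysis.Analysis"
begin

text \<open>A closed polygon in R^3 is given by its cyclic list of vertices; a link is a
  list of polygons (its components).\<close>

type_synonym polygon = "(real^3) list"

definition edge_ends :: "polygon list \<Rightarrow> nat \<times> nat \<Rightarrow> (real^3) \<times> (real^3)" where
  "edge_ends L e = (let P = L ! fst e; n = length P in (P ! snd e, P ! ((snd e + 1) mod n)))"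

definition link_edges :: "polygon list \<Rightarrow> (nat \<times> nat) set" where
  "link_edges L = {(k, i). k < length L \<and> i < length (L ! k)}"

definition edge_len :: "polygon list \<Rightarrow> nat \<times> nat \<Rightarrow> real" where
  "edge_len L e = dist (fst (edge_ends L e)) (snd (edge_ends L e))"

definition edge_seg :: "polygon list \<Rightarrow> nat \<times> nat \<Rightarrow> (real^3) set" where
  "edge_seg L e = closed_segment (fst (edge_ends L e)) (snd (edge_ends L e))"

definition MD :: "polygon list \<Rightarrow> nat \<times> nat \<Rightarrow> nat \<times> nat \<Rightarrow> real" where
  "MD L e e' = setdist (edge_seg L e) (edge_seg L e')"

definition share_vertex :: "polygon list \<Rightarrow> nat \<times> nat \<Rightarrow> nat \<times> nat \<Rightarrow> bool" where
  "share_vertex L e e' \<longleftrightarrow>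
     {fst (edge_ends L e), snd (edge_ends L e)} \<inter> {fst (edge_ends L e'), snd (edge_ends L e')} \<noteq> {}"

definition md_energy :: "polygon list \<Rightarrow> real" where
  "md_energy L = (\<Sum>(e, e') \<in> {(e, e'). e \<in> link_edges L \<and> e' \<in> link_edges L \<and> e \<noteq> e'
                                     \<and> \<not> share_vertex L e e'}.
                    edge_len L e * edge_len L e' / (MD L e e')\<^sup>2)"

definition rect1 :: "real \<Rightarrow> polygon" where
  "rect1 \<alpha> = [vector [1/2, \<alpha>/2, 0], vector [-1/2, \<alpha>/2, 0],
               vector [-1/2, -\<alpha>/2, 0], vector [1/2, -\<alpha>/2, 0]]"

definition rect2 :: "real \<Rightarrow> polygon" where
  "rect2 \<alpha> = [vector [\<alpha>/2, 0, 1/2], vector [-\<alpha>/2, 0, 1/2],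
               vector [-\<alpha>/2, 0, -1/2], vector [\<alpha>/2, 0, -1/2]]"

definition rect3 :: "real \<Rightarrow> polygon" where
  "rect3 \<alpha> = [vector [0, 1/2, \<alpha>/2], vector [0, -1/2, \<alpha>/2],
               vector [0, -1/2, -\<alpha>/2], vector [0, 1/2, -\<alpha>/2]]"

definition borromean :: "real \<Rightarrow> polygon list" where
  "borromean \<alpha> = [rect1 \<alpha>, rect2 \<alpha>, rect3 \<alpha>]"

definition E_B :: "real \<Rightarrow> real" where
  "E_B \<alpha> = 6 * (17 * \<alpha>\<^sup>2 + 16 * \<alpha> / (\<alpha>\<^sup>2 + 1) + 16 / (2 * \<alpha>\<^sup>2 - 2 * \<alpha> + 1)
              + 8 * \<alpha> / (\<alpha> - 1)\<^sup>2 + 8 * \<alpha> / (\<alpha> + 1)\<^sup>2 + 1 / \<alpha>\<^sup>2)"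

end

theory Submission
  imports Defs
begin

text \<open>All edges of the three rectangles are parallel to coordinate axes, and the distance between
  two axis-parallel segments is the Euclidean norm of the gaps between their coordinate
  projections. This makes every term of the MD energy an explicit rational function of \<open>\<alpha>\<close>,
  and the terms add up to \<open>E_B\<close>.

  For the minimum, \<open>E_B' = 6 N / D\<close> with \<open>D > 0\<close> on \<open>(1, \<infinity>)\<close> and \<open>N\<close> a polynomial of
  degree 18. Expanded in powers of \<open>\<alpha> - 1.7564\<close>, resp. in Bernstein form on \<open>[1, 1.7556]\<close>, \<open>N\<close>
  has coefficients of a single sign, so \<open>E_B\<close> decreases up to 1.7556 and increases from 1.7564 on;
  a global minimiser \<open>a\<close> therefore exists in \<open>[1.7556, 1.7564]\<close>. There \<open>E_B a \<le> E_B 1.756 < 542.65\<close>,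
  and since \<open>17 \<alpha>\<^sup>2\<close> increases while the rest of \<open>E_B\<close> decreases, evaluating at the ends of
  16 grid cells gives \<open>E_B > 542.55\<close> on the whole bracket.\<close>

section \<open>Distance between axis-parallel segments\<close>

lemma setdist_real_intervals:
  fixes a b c d :: real
  assumes "a \<le> b" "c \<le> d"
  shows "setdist {a..b} {c..d} = max 0 (max (c - b) (a - d))"
proof (rule antisym)
  show "max 0 (max (c - b) (a - d)) \<le> setdist {a..b} {c..d}"
    using assms by (intro le_setdistI) (auto simp: dist_real_def)
  consider "b < c" | "d < a" | "max a c \<in> {a..b} \<inter> {c..d}"
    using assms by fastforce
  then show "setdist {a..b} {c..d} \<le> max 0 (max (c - b) (a - d))"
  proof cases
    case 1
    then show ?thesis
      using assms setdist_le_dist[of b "{a..b}" c "{c..d}"] by (simp add: dist_real_def)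
  next
    case 2
    then show ?thesis
      using assms setdist_le_dist[of a "{a..b}" d "{c..d}"] by (simp add: dist_real_def)
  next
    case 3
    then show ?thesis
      using setdist_eq_0I[of "max a c" "{a..b}" "{c..d}"] by simp
  qed
qed

lemma setdist_real_segments:
  fixes a b c d :: real
  shows "setdist (closed_segment a b) (closed_segment c d)
           = max 0 (max (min c d - max a b) (min a b - max c d))"
proof -
  have "closed_segment x y = {min x y..max x y}" for x y :: real
    by (simp add: closed_segment_eq_real_ivl min_def max_def)
  then show ?thesis
    by (simp add: setdist_real_intervals)
qed

lemma closed_segment_component:
  fixes p q :: "real^'n"
  assumes "x \<in> closed_segment p q"
  shows "x$i \<in> closed_segment (p$i) (q$i)"
  using assms closed_segment_linear_image[of "\<lambda>x. x$i" p q]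
  by (auto intro: bounded_linear.linear)

lemma closed_segment_axis_parallel_iff:
  fixes p q :: "real^'n"
  assumes "\<And>i. i \<noteq> k \<Longrightarrow> p$i = q$i"
  shows "x \<in> closed_segment p q \<longleftrightarrow> (\<forall>i. x$i \<in> closed_segment (p$i) (q$i))"
proof
  assume x: "\<forall>i. x$i \<in> closed_segment (p$i) (q$i)"
  then obtain u where u: "0 \<le> u" "u \<le> 1" "x$k = (1 - u) * p$k + u * q$k"
    by (auto simp: closed_segment_def)
  have "x$i = ((1 - u) *\<^sub>R p + u *\<^sub>R q)$i" for i
  proof (cases "i = k")
    case False
    then show ?thesis
      using x[rule_format, of i] assms[OF False] by (simp add: algebra_simps)
  qed (simp add: u)
  then show "x \<in> closed_segment p q"
    using u by (auto simp: closed_segment_def vec_eq_iff)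
qed (use closed_segment_component in blast)

lemma setdist_axis_parallel_segments:
  fixes p q r s :: "real^'n"
  assumes "\<And>i. i \<noteq> k \<Longrightarrow> p$i = q$i" "\<And>i. i \<noteq> k' \<Longrightarrow> r$i = s$i"
  shows "setdist (closed_segment p q) (closed_segment r s)
           = L2_set (\<lambda>i. setdist (closed_segment (p$i) (q$i)) (closed_segment (r$i) (s$i))) UNIV"
    (is "_ = L2_set ?g UNIV")
proof (rule antisym)
  have "\<forall>i. \<exists>xy. fst xy \<in> closed_segment (p$i) (q$i) \<and> snd xy \<in> closed_segment (r$i) (s$i)
                 \<and> dist (fst xy) (snd xy) = ?g i"
    using setdist_compact_closed[OF compact_segment closed_segment] by fastforce
  then obtain f where f: "\<And>i. fst (f i) \<in> closed_segment (p$i) (q$i)"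
      "\<And>i. snd (f i) \<in> closed_segment (r$i) (s$i)" "\<And>i. dist (fst (f i)) (snd (f i)) = ?g i"
    by metis
  have "(\<chi> i. fst (f i)) \<in> closed_segment p q" "(\<chi> i. snd (f i)) \<in> closed_segment r s"
    using f by (simp_all add: closed_segment_axis_parallel_iff[OF assms(1)]
                              closed_segment_axis_parallel_iff[OF assms(2)])
  from setdist_le_dist[OF this]
  show "setdist (closed_segment p q) (closed_segment r s) \<le> L2_set ?g UNIV"
    by (simp add: dist_vec_def f(3))
next
  show "L2_set ?g UNIV \<le> setdist (closed_segment p q) (closed_segment r s)"
  proof (rule le_setdistI)
    fix x y assume "x \<in> closed_segment p q" "y \<in> closed_segment r s"
    then have "?g i \<le> dist (x$i) (y$i)" for i
      by (intro setdist_le_dist closed_segment_component)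
    then show "L2_set ?g UNIV \<le> dist x y"
      unfolding dist_vec_def by (intro L2_set_mono) (simp_all add: setdist_pos_le)
  qed auto
qed

section \<open>The MD energy as a sum of interactions of components\<close>

definition polygon_edge :: "polygon \<Rightarrow> nat \<Rightarrow> (real^3) \<times> (real^3)" where
  "polygon_edge P i = (P ! i, P ! ((i + 1) mod length P))"

fun edge_pair_energy :: "(real^3) \<times> (real^3) \<Rightarrow> (real^3) \<times> (real^3) \<Rightarrow> real" where
  "edge_pair_energy (a, b) (c, d) =
     (if {a, b} \<inter> {c, d} = {} then dist a b * dist c d / (setdist (closed_segment a b) (closed_segment c d))\<^sup>2
      else 0)"

definition polygon_interaction :: "polygon \<Rightarrow> polygon \<Rightarrow> real" where
  "polygon_interaction P Q =
     (\<Sum>i<length P. \<Sum>j<length Q. edge_pair_energy (polygon_edge P i) (polygon_edge Q j))"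

lemma edge_pair_energy_commute: "edge_pair_energy e e' = edge_pair_energy e' e"
  by (cases e; cases e') (auto simp: setdist_sym Int_commute)

lemma polygon_interaction_commute: "polygon_interaction P Q = polygon_interaction Q P"
  unfolding polygon_interaction_def by (subst sum.swap) (simp add: edge_pair_energy_commute)

text \<open>The side condition \<open>e \<noteq> e'\<close> of the MD energy is redundant: an edge shares its
  vertices with itself.\<close>
lemma md_energy_eq_sum_interactions:
  "md_energy L = (\<Sum>k<length L. \<Sum>k'<length L. polygon_interaction (L ! k) (L ! k'))"
proof -
  let ?E = "link_edges L"
  have edges: "?E = Sigma {..<length L} (\<lambda>k. {..<length (L ! k)})"
    by (auto simp: link_edges_def)
  have ends: "edge_ends L e = polygon_edge (L ! fst e) (snd e)" for e
    by (simp add: edge_ends_def polygon_edge_def Let_def)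
  have summand: "edge_pair_energy (edge_ends L e) (edge_ends L e')
      = (if e \<noteq> e' \<and> \<not> share_vertex L e e' then edge_len L e * edge_len L e' / (MD L e e')\<^sup>2 else 0)"
    for e e'
    by (cases "edge_ends L e"; cases "edge_ends L e'")
       (auto simp: share_vertex_def edge_len_def MD_def edge_seg_def)
  have "{(e, e'). e \<in> ?E \<and> e' \<in> ?E \<and> e \<noteq> e' \<and> \<not> share_vertex L e e'}
          = Set.filter (\<lambda>(e, e'). e \<noteq> e' \<and> \<not> share_vertex L e e') (?E \<times> ?E)"
    by auto
  then have "md_energy L = (\<Sum>(e, e') \<in> ?E \<times> ?E. edge_pair_energy (edge_ends L e) (edge_ends L e'))"
    unfolding md_energy_def summand by (simp add: sum.inter_filter edges case_prod_unfold)
  also have "\<dots> = (\<Sum>e\<in>?E. \<Sum>e'\<in>?E. edge_pair_energy (edge_ends L e) (edge_ends L e'))"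
    by (simp add: sum.cartesian_product)
  also have "\<dots> = (\<Sum>k<length L. \<Sum>k'<length L. polygon_interaction (L ! k) (L ! k'))"
  proof -
    have split: "(\<Sum>e\<in>?E. f e) = (\<Sum>k<length L. \<Sum>i<length (L ! k). f (k, i))" for f :: "nat \<times> nat \<Rightarrow> real"
      unfolding edges by (subst sum.Sigma) auto
    show ?thesis
      unfolding split polygon_interaction_def ends by (subst sum.swap) simp
  qed
  finally show ?thesis .
qed

lemma md_energy_singleton: "md_energy [P] = polygon_interaction P P"
  by (simp add: md_energy_eq_sum_interactions)

section \<open>The Borromean rectangles\<close>

lemma vector3_eq_iff: "(vector [a, b, c] :: real^3) = vector [a', b', c'] \<longleftrightarrow> a = a' \<and> b = b' \<and> c = c'"
  by (auto simp: vec_eq_iff forall_3)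

lemma dist_vector3: "dist (vector [a, b, c] :: real^3) (vector [a', b', c']) = sqrt ((a - a')\<^sup>2 + (b - b')\<^sup>2 + (c - c')\<^sup>2)"
  by (simp add: dist_vec_def L2_set_def sum_3 dist_real_def)

lemma setdist_segments_vector3:
  assumes "(p1 = q1 \<and> p2 = q2) \<or> (p1 = q1 \<and> p3 = q3) \<or> (p2 = q2 \<and> p3 = q3)"
    and "(r1 = s1 \<and> r2 = s2) \<or> (r1 = s1 \<and> r3 = s3) \<or> (r2 = s2 \<and> r3 = s3)"
  shows "(setdist (closed_segment (vector [p1, p2, p3]) (vector [q1, q2, q3] :: real^3))
                  (closed_segment (vector [r1, r2, r3]) (vector [s1, s2, s3])))\<^sup>2
       = (setdist (closed_segment p1 q1) (closed_segment r1 s1))\<^sup>2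
       + (setdist (closed_segment p2 q2) (closed_segment r2 s2))\<^sup>2
       + (setdist (closed_segment p3 q3) (closed_segment r3 s3))\<^sup>2"
proof -
  have axis: "\<exists>k. \<forall>i. i \<noteq> k \<longrightarrow> (vector [a1, a2, a3] :: real^3)$i = (vector [b1, b2, b3] :: real^3)$i"
    if "(a1 = b1 \<and> a2 = b2) \<or> (a1 = b1 \<and> a3 = b3) \<or> (a2 = b2 \<and> a3 = b3)" for a1 a2 a3 b1 b2 b3 :: real
    using that by (elim disjE) (auto intro: exI[of _ 3] exI[of _ 2] exI[of _ 1] simp: forall_3)
  obtain k k' where "\<And>i. i \<noteq> k \<Longrightarrow> (vector [p1, p2, p3] :: real^3)$i = vector [q1, q2, q3] $ i"
      "\<And>i. i \<noteq> k' \<Longrightarrow> (vector [r1, r2, r3] :: real^3)$i = vector [s1, s2, s3] $ i"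
    using axis[OF assms(1)] axis[OF assms(2)] by blast
  from setdist_axis_parallel_segments[OF this] show ?thesis
    by (simp add: L2_set_def sum_3 add_nonneg_nonneg)
qed

lemmas rect_interaction_simps =
  polygon_interaction_def polygon_edge_def rect1_def rect2_def rect3_def lessThan_nat_numeral
  vector3_eq_iff dist_vector3 dist_real_def setdist_segments_vector3 setdist_real_segments

text \<open>\<open>closed_segment_idem\<close> is removed from the simpset below: it would turn the degenerate
  coordinate segments into singletons, which \<open>setdist_real_segments\<close> no longer matches.\<close>
lemma rect_self_interaction:
  assumes "1 < \<alpha>"
  shows "polygon_interaction (rect1 \<alpha>) (rect1 \<alpha>) = 2 * (\<alpha>\<^sup>2 + 1 / \<alpha>\<^sup>2)"
    and "polygon_interaction (rect2 \<alpha>) (rect2 \<alpha>) = 2 * (\<alpha>\<^sup>2 + 1 / \<alpha>\<^sup>2)"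
    and "polygon_interaction (rect3 \<alpha>) (rect3 \<alpha>) = 2 * (\<alpha>\<^sup>2 + 1 / \<alpha>\<^sup>2)"
  using assms
  by (simp_all add: rect_interaction_simps del: closed_segment_idem)
     (simp_all add: field_simps power2_eq_square)

lemma rect_cross_interaction:
  assumes "1 < \<alpha>"
  shows "polygon_interaction (rect1 \<alpha>) (rect2 \<alpha>) = 16 * \<alpha>\<^sup>2 + 16 * \<alpha> / (\<alpha>\<^sup>2 + 1)
           + 16 / (2 * \<alpha>\<^sup>2 - 2 * \<alpha> + 1) + 8 * \<alpha> / (\<alpha> - 1)\<^sup>2 + 8 * \<alpha> / (\<alpha> + 1)\<^sup>2"
    and "polygon_interaction (rect1 \<alpha>) (rect3 \<alpha>) = 16 * \<alpha>\<^sup>2 + 16 * \<alpha> / (\<alpha>\<^sup>2 + 1)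
           + 16 / (2 * \<alpha>\<^sup>2 - 2 * \<alpha> + 1) + 8 * \<alpha> / (\<alpha> - 1)\<^sup>2 + 8 * \<alpha> / (\<alpha> + 1)\<^sup>2"
    and "polygon_interaction (rect2 \<alpha>) (rect3 \<alpha>) = 16 * \<alpha>\<^sup>2 + 16 * \<alpha> / (\<alpha>\<^sup>2 + 1)
           + 16 / (2 * \<alpha>\<^sup>2 - 2 * \<alpha> + 1) + 8 * \<alpha> / (\<alpha> - 1)\<^sup>2 + 8 * \<alpha> / (\<alpha> + 1)\<^sup>2"
  using assms
  by (simp_all add: rect_interaction_simps del: closed_segment_idem)
     (simp_all add: field_simps power2_eq_square)

lemma md_energy_borromean:
  assumes "1 < \<alpha>"
  shows "md_energy (borromean \<alpha>) = E_B \<alpha>"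
proof -
  let ?I = polygon_interaction and ?R1 = "rect1 \<alpha>" and ?R2 = "rect2 \<alpha>" and ?R3 = "rect3 \<alpha>"
  have "md_energy (borromean \<alpha>) = ?I ?R1 ?R1 + ?I ?R2 ?R2 + ?I ?R3 ?R3
          + 2 * (?I ?R1 ?R2 + ?I ?R1 ?R3 + ?I ?R2 ?R3)"
    unfolding md_energy_eq_sum_interactions borromean_def
    by (simp add: numeral_3_eq_3 polygon_interaction_commute[of ?R2 ?R1]
        polygon_interaction_commute[of ?R3 ?R1] polygon_interaction_commute[of ?R3 ?R2])
  then show ?thesis
    unfolding rect_self_interaction[OF assms] rect_cross_interaction[OF assms] E_B_def
    by (simp add: algebra_simps)
qed

section \<open>The minimum of \<open>E_B\<close>\<close>

lemma real_grid_cell: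
  fixes a h b :: real and N :: nat
  assumes "0 < h" "0 < N" "a \<le> b" "b \<le> a + N * h"
  obtains j where "j < N" "a + j * h \<le> b" "b \<le> a + (j + 1) * h"
proof -
  define k where "k = nat \<lfloor>(b - a) / h\<rfloor>"
  have "0 \<le> (b - a) / h"
    using assms by simp
  then have k: "real k \<le> (b - a) / h" "(b - a) / h < real k + 1"
    unfolding k_def by linarith+
  show thesis
  proof (cases "k < N")
    case True
    with k assms(1) show thesis
      by (intro that[of k]) (auto simp: field_simps)
  next
    case False
    then have "real (N - 1) \<le> (b - a) / h"
      using k(1) assms(2) by (simp add: of_nat_diff)
    with assms show thesis
      by (intro that[of "N - 1"]) (auto simp: field_simps of_nat_diff)
  qed
qed

lemma bracketed_global_min:
  fixes f :: "real \<Rightarrow> real"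
  assumes "L \<le> R" "continuous_on {L..R} f"
    and "\<And>b. b \<in> S \<Longrightarrow> b \<le> L \<Longrightarrow> f L \<le> f b" "\<And>b. b \<in> S \<Longrightarrow> R \<le> b \<Longrightarrow> f R \<le> f b"
  obtains a where "a \<in> {L..R}" "\<And>b. b \<in> S \<Longrightarrow> f a \<le> f b"
proof -
  obtain a where a: "a \<in> {L..R}" and min: "\<And>y. y \<in> {L..R} \<Longrightarrow> f a \<le> f y"
    using continuous_attains_inf[OF compact_Icc _ assms(2)] assms(1) by auto
  have "f a \<le> f b" if "b \<in> S" for b
  proof (cases "b \<le> L \<or> R \<le> b")
    case True
    then show ?thesis
      using assms(1,3,4) min[of L] min[of R] that by force
  next
    case False
    then show ?thesis
      using min[of b] by simp
  qed
  with a show thesis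
    by (rule that)
qed

lemma E_B_quadratic_denom_pos: "0 < 2 * x\<^sup>2 - 2 * x + (1::real)"
proof -
  have "2 * x\<^sup>2 - 2 * x + 1 = x\<^sup>2 + (x - 1)\<^sup>2"
    by (simp add: power2_eq_square algebra_simps)
  then show ?thesis
    by (smt (verit) power2_less_eq_zero_iff zero_le_power2)
qed

definition dE_B :: "real \<Rightarrow> real" where
  "dE_B x = 6 * (34 * x + 16 * (1 - x\<^sup>2) / (x\<^sup>2 + 1)\<^sup>2 - 16 * (4 * x - 2) / (2 * x\<^sup>2 - 2 * x + 1)\<^sup>2
                 + 8 * (- 1 - x) / (x - 1) ^ 3 + 8 * (1 - x) / (x + 1) ^ 3 - 2 / x ^ 3)"

lemma has_real_derivative_x_over_square:
  fixes a c :: real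
  assumes "x + c \<noteq> 0"
  shows "((\<lambda>x. a * x / (x + c)\<^sup>2) has_real_derivative a * (c - x) / (x + c) ^ 3) (at x)"
proof -
  have "((\<lambda>x. a * x / (x + c)\<^sup>2) has_real_derivative (a * (x + c)\<^sup>2 - a * x * (2 * (x + c))) / ((x + c)\<^sup>2)\<^sup>2) (at x)"
    using assms by (intro DERIV_quotient derivative_eq_intros) auto
  moreover have "a * (x + c)\<^sup>2 - a * x * (2 * (x + c)) = a * (c - x) * (x + c)"
    and "((x + c)\<^sup>2)\<^sup>2 = (x + c) ^ 3 * (x + c)"
    by algebra+
  ultimately show ?thesis
    using assms by simp
qed

lemma has_real_derivative_E_B:
  assumes "1 < x"
  shows "(E_B has_real_derivative dE_B x) (at x)"
proof -
  have nz: "x \<noteq> 0" "x - 1 \<noteq> 0" "x + 1 \<noteq> 0" "x\<^sup>2 + 1 \<noteq> 0" "2 * x\<^sup>2 - 2 * x + 1 \<noteq> 0"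
    using assms E_B_quadratic_denom_pos[of x] by (auto simp: add_pos_nonneg)
  have d1: "((\<lambda>x. 17 * x\<^sup>2) has_real_derivative 34 * x) (at x)"
    by (auto intro!: derivative_eq_intros)
  have d2: "((\<lambda>x. 16 * x / (x\<^sup>2 + 1)) has_real_derivative 16 * (1 - x\<^sup>2) / (x\<^sup>2 + 1)\<^sup>2) (at x)"
    using nz by (auto intro!: derivative_eq_intros simp: field_simps power2_eq_square)
  have d3: "((\<lambda>x. 16 / (2 * x\<^sup>2 - 2 * x + 1)) has_real_derivative
              - (16 * (4 * x - 2) / (2 * x\<^sup>2 - 2 * x + 1)\<^sup>2)) (at x)"
    using nz by (auto intro!: derivative_eq_intros simp: field_simps power2_eq_square)
                (metis minus_diff_eq minus_divide_left)
  have d4: "((\<lambda>x. 8 * x / (x - 1)\<^sup>2) has_real_derivative 8 * (- 1 - x) / (x - 1) ^ 3) (at x)"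
    using has_real_derivative_x_over_square[of x "-1" 8] nz by simp
  have d5: "((\<lambda>x. 8 * x / (x + 1)\<^sup>2) has_real_derivative 8 * (1 - x) / (x + 1) ^ 3) (at x)"
    using has_real_derivative_x_over_square[of x 1 8] nz by simp
  have d6: "((\<lambda>x. 1 / x\<^sup>2) has_real_derivative - (2 / x ^ 3)) (at x)"
    using nz by (auto intro!: derivative_eq_intros simp: field_simps power2_eq_square power3_eq_cube)
  have "((\<lambda>x. 6 * (17 * x\<^sup>2 + 16 * x / (x\<^sup>2 + 1) + 16 / (2 * x\<^sup>2 - 2 * x + 1) + 8 * x / (x - 1)\<^sup>2
                   + 8 * x / (x + 1)\<^sup>2 + 1 / x\<^sup>2))
        has_real_derivative 6 * (34 * x + 16 * (1 - x\<^sup>2) / (x\<^sup>2 + 1)\<^sup>2 + - (16 * (4 * x - 2) / (2 * x\<^sup>2 - 2 * x + 1)\<^sup>2)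
                   + 8 * (- 1 - x) / (x - 1) ^ 3 + 8 * (1 - x) / (x + 1) ^ 3 + - (2 / x ^ 3))) (at x)"
    by (intro DERIV_cmult DERIV_add d1 d2 d3 d4 d5 d6)
  then show ?thesis
    unfolding E_B_def[abs_def] dE_B_def by simp
qed

lemma continuous_on_E_B: "continuous_on {1<..} E_B"
  using has_real_derivative_E_B
  by (intro continuous_at_imp_continuous_on ballI DERIV_isCont) auto

text \<open>The homogenised numerator of \<open>E_B'\<close>; the numerator itself is \<open>dE_B_numerator x 1\<close>.\<close>
definition dE_B_numerator :: "real \<Rightarrow> real \<Rightarrow> real" where
  "dE_B_numerator y z =
     2 * z ^ 18 - 8 * y * z ^ 17 + 14 * y ^ 2 * z ^ 16 - 72 * y ^ 3 * z ^ 15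
     + 146 * y ^ 4 * z ^ 14 - 120 * y ^ 5 * z ^ 13 + 174 * y ^ 6 * z ^ 12
     - 744 * y ^ 7 * z ^ 11 + 1886 * y ^ 8 * z ^ 10 - 3528 * y ^ 9 * z ^ 9
     + 3586 * y ^ 10 * z ^ 8 - 2136 * y ^ 11 * z ^ 7 + 390 * y ^ 12 * z ^ 6
     + 216 * y ^ 13 * z ^ 5 - 326 * y ^ 14 * z ^ 4 + 8 * y ^ 15 * z ^ 3
     + 136 * y ^ 16 * z ^ 2 - 272 * y ^ 17 * z + 136 * y ^ 18"

lemma dE_B_numerator_homogeneous: "dE_B_numerator (t * y) (t * z) = t ^ 18 * dE_B_numerator y z"
  unfolding dE_B_numerator_def by algebra

text \<open>Sign certificates: substituting \<open>x = (4391 + u) / 2500\<close>, resp.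
  \<open>x = (4389 P + 2500 Q) / (2500 (P + Q))\<close>, which sweeps \<open>[1, 1.7556]\<close> for \<open>P, Q \<ge> 0\<close>,
  leaves only positive, resp. only negative, coefficients.\<close>
lemma dE_B_numerator_taylor_expansion:
  "dE_B_numerator (4391 + u) 2500 =
       15024546000454820007779421134918799148512050551892871488262867656
       + u * (14738433557836663286802702678016839527028593243352751537830605488
       + u * (53939717898494936595970024748678639927978182167030232200230728
       + u * (93779887286407761085646952328512031813777107754466394408576
       + u * (102660130817720730648263793525244198859275470218366745760
       + u * (79165960439039896680690430068144165904174532600563008
       + u * (45602803273330414350801415316689861970071845025824
       + u * (20307153175778000471509132731815090223998730624
       + u * (7136787957248025917877995043306799676770288
       + u * (2003176985679722110497047194908796287520
       + u * (451452149934810548993539858308008048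
       + u * (81664907199603525394855299917184
       + u * (11786497146226634575345484064
       + u * (1340256223536702046486848
       + u * (117522745867194361760
       + u * (7672235509037696
       + u * (351286611848
       + u * (10069168
       + u * (136))))))))))))))))))"
  unfolding dE_B_numerator_def by algebra

lemma dE_B_numerator_bernstein_expansion:
  "dE_B_numerator (4389 * P + 2500 * Q) (2500 * (P + Q)) =
     - (7450580596923828125000000000000000000000000000000000000000000000 * Q ^ 18
       + 196036696434020996093750000000000000000000000000000000000000000000 * P * Q ^ 17
       + 2441530559659004211425781250000000000000000000000000000000000000000 * P ^ 2 * Q ^ 16
       + 19119573448687553405761718750000000000000000000000000000000000000000 * P ^ 3 * Q ^ 15
       + 105453612082498708415031433105468750000000000000000000000000000000000 * P ^ 4 * Q ^ 14
       + 434763833924628385580663681030273437500000000000000000000000000000000 * P ^ 5 * Q ^ 13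
       + 1387432977862209757359814826965332031250000000000000000000000000000000 * P ^ 6 * Q ^ 12
       + 3500446694472468875692738337420654296875000000000000000000000000000000 * P ^ 7 * Q ^ 11
       + 7067892869484998864560055276655302276611328125000000000000000000000000 * P ^ 8 * Q ^ 10
       + 11484562244205409830993167702595055187683105468750000000000000000000000 * P ^ 9 * Q ^ 9
       + 15014367295476100161061087923072683873641931152343750000000000000000000 * P ^ 10 * Q ^ 8
       + 15699670091417985172083368413672170570781674785156250000000000000000000 * P ^ 11 * Q ^ 7
       + 12965964099923836351122252105022963772860782254526367187500000000000000 * P ^ 12 * Q ^ 6
       + 8278127343481904942224481859763244004394194756114720703125000000000000 * P ^ 13 * Q ^ 5
       + 3944748144989644175351560795197300453602465927358598817421875000000000 * P ^ 14 * Q ^ 4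
       + 1321850506913697214997595181613137454037735569810716047771375000000000 * P ^ 15 * Q ^ 3
       + 278105817221153248765506010017254817408172930719858781393253000000000 * P ^ 16 * Q ^ 2
       + 27691723686313327508512044007680837798548344751199808816067882240000 * P ^ 17 * Q
       + 14237310842691119750128496419807173175877622910029120343932753784 * P ^ 18)"
  unfolding dE_B_numerator_def by algebra

definition dE_B_denominator :: "real \<Rightarrow> real" where
  "dE_B_denominator x = x ^ 3 * (x - 1) ^ 3 * (x + 1) ^ 3 * (x\<^sup>2 + 1)\<^sup>2 * (2 * x\<^sup>2 - 2 * x + 1)\<^sup>2"

lemma dE_B_denominator_pos: "1 < x \<Longrightarrow> 0 < dE_B_denominator x"
  unfolding dE_B_denominator_def using E_B_quadratic_denom_pos[of x]
  by (intro mult_pos_pos zero_less_power) (auto intro: add_pos_nonneg)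

lemma dE_B_eq_numerator:
  assumes "1 < x"
  shows "dE_B x * dE_B_denominator x = 6 * dE_B_numerator x 1"
proof -
  \<comment> \<open>clearing one denominator per summand keeps the final identity at degree 18\<close>
  have clear: "6 * (34 * x + B / c\<^sup>2 - C / q\<^sup>2 + E / a ^ 3 + F / b ^ 3 - 2 / x ^ 3) * (x ^ 3 * a ^ 3 * b ^ 3 * c\<^sup>2 * q\<^sup>2)
      = 6 * (34 * x * x ^ 3 * a ^ 3 * b ^ 3 * c\<^sup>2 * q\<^sup>2 + B * x ^ 3 * a ^ 3 * b ^ 3 * q\<^sup>2 - C * x ^ 3 * a ^ 3 * b ^ 3 * c\<^sup>2
        + E * x ^ 3 * b ^ 3 * c\<^sup>2 * q\<^sup>2 + F * x ^ 3 * a ^ 3 * c\<^sup>2 * q\<^sup>2 - 2 * a ^ 3 * b ^ 3 * c\<^sup>2 * q\<^sup>2)"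
    if "x \<noteq> 0" "a \<noteq> 0" "b \<noteq> 0" "c \<noteq> 0" "q \<noteq> 0" for a b c q B C E F :: real
    using that by (simp add: field_simps)
  have "x \<noteq> 0" "x - 1 \<noteq> 0" "x + 1 \<noteq> 0" "x\<^sup>2 + 1 \<noteq> 0" "2 * x\<^sup>2 - 2 * x + 1 \<noteq> 0"
    using assms E_B_quadratic_denom_pos[of x] by (auto simp: add_pos_nonneg)
  then have "dE_B x * dE_B_denominator x = 6 * (34 * x * x ^ 3 * (x - 1) ^ 3 * (x + 1) ^ 3 * (x\<^sup>2 + 1)\<^sup>2 * (2 * x\<^sup>2 - 2 * x + 1)\<^sup>2
        + 16 * (1 - x\<^sup>2) * x ^ 3 * (x - 1) ^ 3 * (x + 1) ^ 3 * (2 * x\<^sup>2 - 2 * x + 1)\<^sup>2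
        - 16 * (4 * x - 2) * x ^ 3 * (x - 1) ^ 3 * (x + 1) ^ 3 * (x\<^sup>2 + 1)\<^sup>2
        + 8 * (- 1 - x) * x ^ 3 * (x + 1) ^ 3 * (x\<^sup>2 + 1)\<^sup>2 * (2 * x\<^sup>2 - 2 * x + 1)\<^sup>2
        + 8 * (1 - x) * x ^ 3 * (x - 1) ^ 3 * (x\<^sup>2 + 1)\<^sup>2 * (2 * x\<^sup>2 - 2 * x + 1)\<^sup>2
        - 2 * (x - 1) ^ 3 * (x + 1) ^ 3 * (x\<^sup>2 + 1)\<^sup>2 * (2 * x\<^sup>2 - 2 * x + 1)\<^sup>2)"
    unfolding dE_B_def dE_B_denominator_def by (rule clear)
  also have "\<dots> = 6 * dE_B_numerator x 1"
    unfolding dE_B_numerator_def power_one mult_1_right by algebra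
  finally show ?thesis .
qed

lemma dE_B_numerator_pos:
  assumes "1.7564 \<le> x"
  shows "0 < dE_B_numerator x 1"
proof -
  define u where "u = 2500 * x - 4391"
  have "0 \<le> u"
    using assms by (simp add: u_def)
  have "2500 ^ 18 * dE_B_numerator x 1 = dE_B_numerator (4391 + u) 2500"
    using dE_B_numerator_homogeneous[of 2500 x 1] by (simp add: u_def)
  also have "\<dots> > 0"
    unfolding dE_B_numerator_taylor_expansion using \<open>0 \<le> u\<close>
    by (intro add_pos_nonneg mult_nonneg_nonneg add_nonneg_nonneg) simp_all
  finally show ?thesis
    by (simp add: zero_less_mult_iff)
qed

lemma dE_B_numerator_neg:
  assumes "1 < x" "x \<le> 1.7556"
  shows "dE_B_numerator x 1 < 0"
proof -
  define P Q where "P = 2500 * x - 2500" and "Q = 4389 - 2500 * x"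
  have "0 < P" "0 \<le> Q"
    using assms by (simp_all add: P_def Q_def)
  have "(2500 * 1889) ^ 18 * dE_B_numerator x 1 = dE_B_numerator (4389 * P + 2500 * Q) (2500 * (P + Q))"
    using dE_B_numerator_homogeneous[of "2500 * 1889" x 1] by (simp add: P_def Q_def algebra_simps)
  also have "\<dots> < 0"
    unfolding dE_B_numerator_bernstein_expansion neg_less_0_iff_less using \<open>0 < P\<close> \<open>0 \<le> Q\<close>
    by (intro add_nonneg_pos add_nonneg_nonneg mult_nonneg_nonneg mult_pos_pos zero_le_power
        zero_less_power) simp_all
  finally show ?thesis
    by (simp add: mult_less_0_iff)
qed

lemma dE_B_neg:
  assumes "1 < x" "x \<le> 1.7556"
  shows "dE_B x < 0"
proof -
  have "dE_B x * dE_B_denominator x < 0"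
    using dE_B_eq_numerator[OF assms(1)] dE_B_numerator_neg[OF assms] by simp
  then show ?thesis
    using dE_B_denominator_pos[OF assms(1)] by (simp add: mult_less_0_iff)
qed

lemma dE_B_pos:
  assumes "1.7564 \<le> x"
  shows "0 < dE_B x"
proof -
  have "1 < x"
    using assms by simp
  have "0 < dE_B x * dE_B_denominator x"
    using dE_B_eq_numerator[OF \<open>1 < x\<close>] dE_B_numerator_pos[OF assms] by simp
  then show ?thesis
    using dE_B_denominator_pos[OF \<open>1 < x\<close>] by (simp add: zero_less_mult_iff)
qed

lemma E_B_antimono_left:
  assumes "1 < b" "b \<le> 1.7556"
  shows "E_B 1.7556 \<le> E_B b"
  using assms(2)
proof (rule DERIV_nonpos_imp_nonincreasing)
  fix x assume "b \<le> x" "x \<le> 1.7556"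
  then show "\<exists>y. (E_B has_real_derivative y) (at x) \<and> y \<le> 0"
    using assms has_real_derivative_E_B[of x] dE_B_neg[of x] by (intro exI[of _ "dE_B x"]) auto
qed

lemma E_B_mono_right:
  assumes "1.7564 \<le> b"
  shows "E_B 1.7564 \<le> E_B b"
  using assms
proof (rule DERIV_nonneg_imp_nondecreasing)
  fix x assume "1.7564 \<le> x" "x \<le> b"
  then show "\<exists>y. (E_B has_real_derivative y) (at x) \<and> 0 \<le> y"
    using has_real_derivative_E_B[of x] dE_B_pos[of x] by (intro exI[of _ "dE_B x"]) auto
qed

definition E_B_rational_part :: "real \<Rightarrow> real" where
  "E_B_rational_part x = 16 * x / (x\<^sup>2 + 1) + 16 / (2 * x\<^sup>2 - 2 * x + 1)
                         + 8 * x / (x - 1)\<^sup>2 + 8 * x / (x + 1)\<^sup>2 + 1 / x\<^sup>2"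

lemma E_B_eq_rational_part: "E_B x = 6 * (17 * x\<^sup>2 + E_B_rational_part x)"
  by (simp add: E_B_def E_B_rational_part_def add.assoc)

lemma divide_square_shift_antimono:
  fixes c d x y :: real
  assumes "0 \<le> c" "x \<le> y" "d\<^sup>2 \<le> x * y" "x + d \<noteq> 0" "y + d \<noteq> 0"
  shows "c * y / (y + d)\<^sup>2 \<le> c * x / (x + d)\<^sup>2"
proof -
  have "c * x * (y + d)\<^sup>2 - c * y * (x + d)\<^sup>2 = c * ((y - x) * (x * y - d\<^sup>2))"
    by algebra
  moreover have "0 \<le> c * ((y - x) * (x * y - d\<^sup>2))"
    using assms(1-3) by (intro mult_nonneg_nonneg) auto
  ultimately show ?thesis
    using assms(4,5) by (simp add: divide_simps)
qed

lemma E_B_rational_part_antimono: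
  assumes "1 < x" "x \<le> y"
  shows "E_B_rational_part y \<le> E_B_rational_part x"
proof -
  have "1 < y"
    using assms by simp
  have "1 < x * y"
    using assms(1) \<open>1 < y\<close> by (rule less_1_mult)
  then have key: "0 \<le> (y - x) * (x * y - 1)"
    using assms by (intro mult_nonneg_nonneg) auto
  have "8 * y / (y + 1)\<^sup>2 \<le> 8 * x / (x + 1)\<^sup>2"
    using assms \<open>1 < x * y\<close> by (intro divide_square_shift_antimono) auto
  moreover have "8 * y / (y - 1)\<^sup>2 \<le> 8 * x / (x - 1)\<^sup>2"
    using assms \<open>1 < y\<close> \<open>1 < x * y\<close> divide_square_shift_antimono[of 8 x y "-1"] by simp
  moreover have "16 * y / (y\<^sup>2 + 1) \<le> 16 * x / (x\<^sup>2 + 1)"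
  proof -
    have "16 * x * (y\<^sup>2 + 1) - 16 * y * (x\<^sup>2 + 1) = 16 * ((y - x) * (x * y - 1))"
      by algebra
    then have "16 * y * (x\<^sup>2 + 1) \<le> 16 * x * (y\<^sup>2 + 1)"
      using key by linarith
    moreover have "0 < x\<^sup>2 + 1" "0 < y\<^sup>2 + 1"
      by (auto intro: add_nonneg_pos)
    ultimately show ?thesis
      by (simp add: divide_simps)
  qed
  moreover have "16 / (2 * y\<^sup>2 - 2 * y + 1) \<le> 16 / (2 * x\<^sup>2 - 2 * x + 1)"
  proof (rule divide_left_mono)
    have "(2 * y\<^sup>2 - 2 * y + 1) - (2 * x\<^sup>2 - 2 * x + 1) = 2 * ((y - x) * (x + y - 1))"
      by algebra
    moreover have "0 \<le> (y - x) * (x + y - 1)"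
      using assms by (intro mult_nonneg_nonneg) auto
    ultimately show "2 * x\<^sup>2 - 2 * x + 1 \<le> 2 * y\<^sup>2 - 2 * y + 1"
      by linarith
  qed (use E_B_quadratic_denom_pos[of x] E_B_quadratic_denom_pos[of y] in simp_all)
  moreover have "1 / y\<^sup>2 \<le> 1 / x\<^sup>2"
    using assms by (intro divide_left_mono power_mono) auto
  ultimately show ?thesis
    unfolding E_B_rational_part_def by linarith
qed

lemma E_B_ge_cell_bound:
  assumes "1 < u" "u \<le> b" "b \<le> v"
  shows "6 * (17 * u\<^sup>2 + E_B_rational_part v) \<le> E_B b"
proof -
  have "u\<^sup>2 \<le> b\<^sup>2"
    using assms by (intro power_mono) auto
  moreover have "E_B_rational_part v \<le> E_B_rational_part b"
    using assms by (intro E_B_rational_part_antimono) auto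
  ultimately show ?thesis
    unfolding E_B_eq_rational_part by simp
qed

lemma E_B_grid_bounds:
  "\<forall>j<16. 542.55 < 6 * (17 * (1.7556 + real j * 0.00005)\<^sup>2
                        + E_B_rational_part (1.7556 + (real j + 1) * 0.00005))"
  by (simp add: numeral_eq_Suc All_less_Suc E_B_rational_part_def power_divide field_simps)

lemma E_B_gt_near_minimum:
  assumes "1.7556 \<le> b" "b \<le> 1.7564"
  shows "542.55 < E_B b"
proof -
  have "0 < (0.00005::real)" "0 < (16::nat)" "1.7556 \<le> b" "b \<le> 1.7556 + real 16 * 0.00005"
    using assms by simp_all
  then obtain j where j: "j < 16" "1.7556 + real j * 0.00005 \<le> b" "b \<le> 1.7556 + (real j + 1) * 0.00005"
    by (rule real_grid_cell)
  have "6 * (17 * (1.7556 + real j * 0.00005)\<^sup>2 + E_B_rational_part (1.7556 + (real j + 1) * 0.00005))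
        \<le> E_B b"
    using j(2,3) by (intro E_B_ge_cell_bound) simp_all
  with E_B_grid_bounds[rule_format, OF j(1)] show ?thesis
    by linarith
qed

lemma E_B_at_1_756: "E_B 1.756 < 542.65"
  by (simp add: E_B_def power_divide field_simps)

theorem mainTheorem5:
  shows "(\<forall>\<alpha>::real. \<alpha> > 1 \<longrightarrow>
            md_energy (borromean \<alpha>) = E_B \<alpha>
          \<and> md_energy [rect1 \<alpha>] = 2 * (\<alpha>\<^sup>2 + 1 / \<alpha>\<^sup>2)
          \<and> md_energy [rect2 \<alpha>] = 2 * (\<alpha>\<^sup>2 + 1 / \<alpha>\<^sup>2)
          \<and> md_energy [rect3 \<alpha>] = 2 * (\<alpha>\<^sup>2 + 1 / \<alpha>\<^sup>2))
       \<and> (\<exists>a::real. a > 1 \<and> (\<forall>b::real. b > 1 \<longrightarrow> E_B a \<le> E_B b)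
            \<and> \<bar>a - 1.756\<bar> < 0.0005 \<and> \<bar>E_B a - 542.6\<bar> < 0.05)"
proof (intro conjI, goal_cases)
  case 1
  show ?case
    by (simp add: md_energy_borromean md_energy_singleton rect_self_interaction)
next
  case 2
  obtain a where a: "a \<in> {1.7556..1.7564}" and min: "\<And>b. b \<in> {1<..} \<Longrightarrow> E_B a \<le> E_B b"
  proof (rule bracketed_global_min[of "1.7556" "1.7564" E_B "{1<..}"])
    show "continuous_on {1.7556..1.7564} E_B"
      by (rule continuous_on_subset[OF continuous_on_E_B]) auto
    show "E_B 1.7556 \<le> E_B b" if "b \<in> {1<..}" "b \<le> 1.7556" for b
      using that by (intro E_B_antimono_left) auto
    show "E_B 1.7564 \<le> E_B b" if "1.7564 \<le> b" for b
      using that by (rule E_B_mono_right)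
  qed (simp_all add: that)
  have "542.55 < E_B a"
    using a by (intro E_B_gt_near_minimum) auto
  moreover have "E_B a \<le> E_B 1.756"
    using min by simp
  ultimately have "\<bar>E_B a - 542.6\<bar> < 0.05"
    unfolding abs_less_iff using E_B_at_1_756 by simp
  moreover have "\<bar>a - 1.756\<bar> < 0.0005"
    unfolding abs_less_iff using a by simp
  ultimately show ?case
    using a min by (intro exI[of _ a]) auto
qed

end
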